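(* Let $A\in\mathbb{R}^{m\times n}$ have no zero row, with rows $a_1^T,\dots,a_m^T$, let ${\bf u}=(\mu_1,\dots,\mu_m)\in\mathbb{R}^m$, $h_{k,l}=a_k^Ta_l/\|a_l\|_2^2$, and let $C({\bf u})\in\mathbb{R}^{m\times m}$ be the unit upper triangular matrix whose $(i,j)$ entry for $j>i$ is $$\sum_{v=2}^{j-i+1}(-1)^{v-1}\sum_{i=t_1<t_2<\dots<t_v=j}\ \prod_{s=1}^{v-1}\mu_{t_{s+1}}\prod_{s=1}^{v-1}h_{t_s,t_{s+1}}.$$ Let $\Lambda=\mathrm{diag}(\mu_1,\dots,\mu_m)$ and $M=\mathrm{diag}(1/\|a_1\|_2^2,\dots,1/\|a_m\|_2^2)$. Then there exists an upper triangular matrix $T_u({\bf u})\in\mathbb{R}^{m\times m}$ with diagonal entries $[T_u({\bf u})](i,i)=\mu_i\|a_i\|_2^2$ such that $\Lambda C({\bf u})=T_u({\bf u})M$.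
   Context: The inner sum runs over strictly increasing integer sequences from $i$ to $j$ of length $v$. *)

theory Defs
  imports "Jordan_Normal_Form.Matrix"
begin

(* Rows are indexed 0..m-1 (0-based) instead of 1..m. *)

definition rownorm2 :: "real mat \<Rightarrow> nat \<Rightarrow> real" where
  "rownorm2 A k = row A k \<bullet> row A k"

definition hcoef :: "real mat \<Rightarrow> nat \<Rightarrow> nat \<Rightarrow> real" where
  "hcoef A k l = (row A k \<bullet> row A l) / rownorm2 A l"

definition chains :: "nat \<Rightarrow> nat \<Rightarrow> nat \<Rightarrow> nat list set" where
  "chains i j v = {t. length t = v \<and> sorted_wrt (<) t \<and> t ! 0 = i \<and> t ! (v - 1) = j}"

definition Cmat :: "real mat \<Rightarrow> (nat \<Rightarrow> real) \<Rightarrow> real mat" where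
  "Cmat A u = mat (dim_row A) (dim_row A) (\<lambda>(i, j).
     if i = j then 1
     else if i < j then
       (\<Sum>v = 2..j - i + 1. (-1) ^ (v - 1) *
          (\<Sum>t \<in> chains i j v.
             (\<Prod>s = 1..v - 1. u (t ! s)) * (\<Prod>s = 1..v - 1. hcoef A (t ! (s - 1)) (t ! s))))
     else 0)"

definition diag_matrix :: "nat \<Rightarrow> (nat \<Rightarrow> real) \<Rightarrow> real mat" where
  "diag_matrix m d = mat m m (\<lambda>(i, j). if i = j then d i else 0)"

end

(* Only the shape of C(u) matters, not the chain sums defining its entries: C(u) is unit upper
   triangular, so T := \<Lambda> C(u) M\<inverse> is upper triangular with diagonal \<mu>\<^sub>i \<parallel>a\<^sub>i\<parallel>\<^sup>2,
   and M is invertible because A has no zero row. *)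

theory Submission
  imports Defs
begin

lemma diag_matrix_eq_mat_diag: "diag_matrix m d = mat_diag m d"
  unfolding diag_matrix_def mat_diag_def by (rule eq_matI) auto

lemma scalar_prod_self_nonzero:
  fixes v :: "real vec"
  assumes "v \<in> carrier_vec n" "v \<noteq> 0\<^sub>v n"
  shows "v \<bullet> v \<noteq> 0"
proof
  assume "v \<bullet> v = 0"
  then have "(\<Sum>i\<in>{0..<n}. v $ i * v $ i) = 0"
    using assms(1) by (simp add: scalar_prod_def)
  then have "\<forall>i\<in>{0..<n}. v $ i * v $ i = 0"
    by (subst sum_nonneg_eq_0_iff[symmetric]) auto
  then have "v = 0\<^sub>v n"
    using assms(1) by (intro eq_vecI) auto
  with assms(2) show False ..
qed

lemma rownorm2_nonzero:
  assumes "A \<in> carrier_mat m n" "k < m" "row A k \<noteq> 0\<^sub>v n"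
  shows "rownorm2 A k \<noteq> 0"
  unfolding rownorm2_def using assms by (intro scalar_prod_self_nonzero[of _ n]) auto

lemma Cmat_carrier: "Cmat A u \<in> carrier_mat (dim_row A) (dim_row A)"
  by (simp add: Cmat_def)

lemma Cmat_diag: "i < dim_row A \<Longrightarrow> Cmat A u $$ (i, i) = 1"
  by (simp add: Cmat_def)

lemma upper_triangular_Cmat: "upper_triangular (Cmat A u)"
  unfolding upper_triangular_def by (simp add: Cmat_def)

lemma mat_diag_mult_mult_mat_diag:
  assumes "C \<in> carrier_mat m m"
  shows "mat_diag m l * C * mat_diag m r = mat m m (\<lambda>(i, j). l i * C $$ (i, j) * r j)"
  using assms by (auto simp: mat_diag_mult_left mat_diag_mult_right[of _ m m] intro!: eq_matI)

lemma upper_triangular_diag_scaling: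
  assumes "C \<in> carrier_mat m m" "upper_triangular C"
  shows "upper_triangular (mat_diag m l * C * mat_diag m r)"
  using assms unfolding upper_triangular_def by (simp add: mat_diag_mult_mult_mat_diag)

lemma mat_diag_mult_eq_scaled_mult_mat_diag:
  fixes C :: "'a :: field mat"
  assumes C: "C \<in> carrier_mat m m" and r: "\<And>j. j < m \<Longrightarrow> r j \<noteq> 0"
  shows "mat_diag m l * C = (mat_diag m l * C * mat_diag m r) * mat_diag m (\<lambda>j. 1 / r j)"
proof -
  have LC: "mat_diag m l * C \<in> carrier_mat m m"
    using C by (rule mult_carrier_mat[OF mat_diag_dim])
  have "mat_diag m r * mat_diag m (\<lambda>j. 1 / r j) = mat_diag m (\<lambda>j. r j * (1 / r j))"
    by (rule mat_diag_diag)
  also have "\<dots> = 1\<^sub>m m"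
    using r by (intro eq_matI) (auto simp: mat_diag_def)
  finally have inverse: "mat_diag m r * mat_diag m (\<lambda>j. 1 / r j) = 1\<^sub>m m" .
  have "(mat_diag m l * C * mat_diag m r) * mat_diag m (\<lambda>j. 1 / r j)
      = (mat_diag m l * C) * (mat_diag m r * mat_diag m (\<lambda>j. 1 / r j))"
    by (rule assoc_mult_mat[OF LC mat_diag_dim mat_diag_dim])
  also have "\<dots> = mat_diag m l * C"
    unfolding inverse using LC by (rule right_mult_one_mat)
  finally show ?thesis ..
qed

theorem lemma3p10:
  fixes A :: "real mat" and u :: "nat \<Rightarrow> real" and m n :: nat
  assumes "A \<in> carrier_mat m n"
    and "\<forall>k < m. row A k \<noteq> 0\<^sub>v n"
  shows "\<exists>T \<in> carrier_mat m m. upper_triangular T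
           \<and> (\<forall>i < m. T $$ (i, i) = u i * rownorm2 A i)
           \<and> diag_matrix m u * Cmat A u = T * diag_matrix m (\<lambda>i. 1 / rownorm2 A i)"
proof -
  define T where "T = mat_diag m u * Cmat A u * mat_diag m (rownorm2 A)"
  have C: "Cmat A u \<in> carrier_mat m m"
    using Cmat_carrier assms(1) by auto
  have nz: "rownorm2 A j \<noteq> 0" if "j < m" for j
    using rownorm2_nonzero[OF assms(1) that] assms(2) that by blast
  have "T \<in> carrier_mat m m"
    unfolding T_def mat_diag_mult_mult_mat_diag[OF C] by simp
  moreover have "upper_triangular T"
    unfolding T_def by (rule upper_triangular_diag_scaling[OF C upper_triangular_Cmat])
  moreover have "T $$ (i, i) = u i * rownorm2 A i" if "i < m" for i
    using that Cmat_diag[of i A u] assms(1) by (simp add: T_def mat_diag_mult_mult_mat_diag[OF C])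
  moreover have "diag_matrix m u * Cmat A u = T * diag_matrix m (\<lambda>i. 1 / rownorm2 A i)"
    unfolding T_def diag_matrix_eq_mat_diag by (rule mat_diag_mult_eq_scaled_mult_mat_diag[OF C nz])
  ultimately show ?thesis
    by (intro bexI[of _ T]) simp_all
qed

end
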